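(* Let $M\equiv\lambda\,\mathit{argClass}.\,\mathbf{Y}(\lambda\,\mathit{myClass}\,\lambda\,\mathit{state}.\,(\mathit{argClass}\;\mathit{state})\oplus R)$ be a mixin and let $\sigma\in\mathbb{T}$, $\rho_1,\rho_2\in\mathbb{T}_R$ be types not containing $+$ (and whose translations are defined) with $\mathit{lbl}(\rho_2)=\mathit{lbl}(R)$, such that for all $\rho\in\mathbb{T}_R$, $\vdash M:(\sigma\to\rho\cap\rho_1)\to(\sigma\to\rho+\rho_2)$. Define $\tau_M\equiv(([\![\sigma]\!]\to[\![\rho_1]\!])\to([\![\sigma]\!]\to[\![\rho_2]\!]))\cap\bigcap_{l\in\mathcal{L}\setminus\mathit{lbl}(R)}(([\![\sigma]\!]\to\langle\!\langle l(\alpha_l)\rangle\!\rangle)\to([\![\sigma]\!]\to\langle\!\langle l(\alpha_l)\rangle\!\rangle))$ with distinct type variables $\alpha_l$. Then for any substitution $S$ and any type $\tau\in\mathbb{T}$ such that $[\![\tau]\!]=S(\tau_M)$, we have $\vdash M:\tau$.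
   Context: \textbf{Terms.} $\Lambda_R\ni M,N ::= x\mid\lambda x.M\mid MN\mid M.l\mid R\mid M\oplus R$, records $R ::= \langle l_i=M_i\mid i\in I\rangle$, $\mathit{lbl}(\langle l_i=M_i\mid i\in I\rangle)=\{l_i\mid i\in I\}$. $\mathbf{Y}=\lambda f.(\lambda x.f(xx))(\lambda x.f(xx))$. A mixin is a closed term of the displayed form. \textbf{Types.} $\mathbb{T}\ni\sigma ::= a\mid\omega\mid\sigma_1\to\sigma_2\mid\sigma_1\cap\sigma_2\mid\rho$, $\mathbb{T}_R\ni\rho ::= \langle\rangle\mid\langle l:\sigma\rangle\mid\rho_1+\rho_2\mid\rho_1\cap\rho_2$. Subtyping $\le$: least preorder with $\sigma\le\omega$; $\omega\le\omega\to\omega$; $\sigma\cap\tau\le\sigma,\tau$; $\sigma\le\tau_1,\sigma\le\tau_2\Rightarrow\sigma\le\tau_1\cap\tau_2$; $(\sigma\to\tau_1)\cap(\sigma\to\tau_2)\le\sigma\to\tau_1\cap\tau_2$; $\sigma_2\le\sigma_1,\tau_1\le\tau_2\Rightarrow\sigma_1\to\tau_1\le\sigma_2\to\tau_2$; $\langle l:\sigma\rangle\le\langle\rangle$; $\langle l:\sigma\rangle\cap\langle l:\tau\rangle\le\langle l:\sigma\cap\tau\rangle$; $\sigma\le\tau\Rightarrow\langle l:\sigma\rangle\le\langle l:\tau\rangle$; $\rho+\langle\rangle=\langle\rangle+\rho=\rho$; $(\rho_1+\rho_2)+\rho_3=\rho_1+(\rho_2+\rho_3)$; $(\rho_1\cap\rho_2)+\rho_3=(\rho_1+\rho_3)\cap(\rho_2+\rho_3)$;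 $\langle l:\sigma\rangle+(\langle l:\tau\rangle\cap\rho)=\langle l:\tau\rangle\cap\rho$; $\langle l:\sigma\rangle+(\langle l':\tau\rangle\cap\rho)=\langle l':\tau\rangle\cap(\langle l:\sigma\rangle+\rho)$ if $l\neq l'$; $\rho_1\le\rho_2\Rightarrow\rho_1+\rho\le\rho_2+\rho$; $\rho_1=\rho_2\Rightarrow\rho+\rho_1=\rho+\rho_2$ ($=$ is $\le$ in both directions). $\mathit{lbl}(\langle\rangle)=\emptyset$, $\mathit{lbl}(\langle l:\sigma\rangle)=\{l\}$, $\mathit{lbl}(\rho_1\cap\rho_2)=\mathit{lbl}(\rho_1+\rho_2)=\mathit{lbl}(\rho_1)\cup\mathit{lbl}(\rho_2)$. \textbf{Type assignment} $\Gamma\vdash M:\sigma$ ($\vdash$ with empty basis): variable axiom; $\to$-intro/elim; $\cap$-intro; $\Gamma\vdash M:\omega$; subsumption along $\le$; $\Gamma\vdash\langle l_i=M_i\mid i\in I\rangle:\langle\rangle$; from $\Gamma\vdash M_k:\sigma$, $k\in I$ infer $\Gamma\vdash\langle l_i=M_i\mid i\in I\rangle:\langle l_k:\sigma\rangle$; from $\Gamma\vdash M:\langle l:\sigma\rangle$ infer $\Gamma\vdash M.l:\sigma$; from $\Gamma\vdash M:\rho_1$, $\Gamma\vdash R:\rho_2$, $\mathit{lbl}(R)=\mathit{lbl}(\rho_2)$ infer $\Gamma\vdash M\oplus R:\rho_1+\rho_2$. \textbf{Target types and translation.} $\mathbb{T}_C\ni\tau ::= a\mid\alpha\mid\omega\mid\tau_1\to\tau_2\mid\tau_1\cap\tau_2\mid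 c(\tau)$ ($\alpha$ type variables, $c$ unary constructors), with subtyping given by the arrow/intersection axioms above plus $\tau_1\le\tau_2\Rightarrow c(\tau_1)\le c(\tau_2)$ and $c(\tau_1)\cap c(\tau_2)\le c(\tau_1\cap\tau_2)$; $=$ denotes equivalence. Substitutions map type variables to $\mathbb{T}_C$-types. $\mathcal{L}$ is a fixed finite set of labels; constructors $\langle\!\langle\cdot\rangle\!\rangle$ and $l(\cdot)$ for $l\in\mathcal{L}$. The partial translation $[\![\cdot]\!]:\mathbb{T}\to\mathbb{T}_C$: $[\![\omega]\!]=\omega$, $[\![a]\!]=a$, $[\![\sigma\to\tau]\!]=[\![\sigma]\!]\to[\![\tau]\!]$, $[\![\sigma\cap\tau]\!]=[\![\sigma]\!]\cap[\![\tau]\!]$, $[\![\langle l:\tau\rangle]\!]=\langle\!\langle l([\![\tau]\!])\rangle\!\rangle$, $[\![\langle\rangle]\!]=\langle\!\langle\omega\rangle\!\rangle$; undefined on types containing $+$. *)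

theory Defs
  imports Main
begin

type_synonym var = nat
type_synonym label = nat
type_synonym atom = nat
type_synonym tvar = nat

text \<open>Records are lists of (label, term) pairs; a record expression is \<open>Rec R\<close>,
  and \<open>Merge M R\<close> is \<open>M \<oplus> R\<close> (the right argument is syntactically a record).\<close>

datatype trm =
    Var var
  | Lam var trm
  | App trm trm
  | Sel trm label
  | Rec "(label \<times> trm) list"
  | Merge trm "(label \<times> trm) list"

definition lblR :: "(label \<times> trm) list \<Rightarrow> label set" where
  "lblR R = set (map fst R)"

fun fv :: "trm \<Rightarrow> var set" where
  "fv (Var x) = {x}"
| "fv (Lam x M) = fv M - {x}"
| "fv (App M N) = fv M \<union> fv N"
| "fv (Sel M l) = fv M"
| "fv (Rec R) = (\<Union>p\<in>set R. fv (snd p))"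
| "fv (Merge M R) = fv M \<union> (\<Union>p\<in>set R. fv (snd p))"

fun wf_trm :: "trm \<Rightarrow> bool" where
  "wf_trm (Var x) = True"
| "wf_trm (Lam x M) = wf_trm M"
| "wf_trm (App M N) = (wf_trm M \<and> wf_trm N)"
| "wf_trm (Sel M l) = wf_trm M"
| "wf_trm (Rec R) = (distinct (map fst R) \<and> (\<forall>p\<in>set R. wf_trm (snd p)))"
| "wf_trm (Merge M R) = (wf_trm M \<and> distinct (map fst R) \<and> (\<forall>p\<in>set R. wf_trm (snd p)))"

text \<open>The fixed point combinator Y = \<lambda>f.(\<lambda>x.f(xx))(\<lambda>x.f(xx)) (closed, so the
  choice of bound names 0, 1 is immaterial).\<close>
definition Ycomb :: trm where
  "Ycomb = Lam 0 (App (Lam 1 (App (Var 0) (App (Var 1) (Var 1))))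
                      (Lam 1 (App (Var 0) (App (Var 1) (Var 1)))))"

definition mixin :: "var \<Rightarrow> var \<Rightarrow> var \<Rightarrow> (label \<times> trm) list \<Rightarrow> trm" where
  "mixin a m s R = Lam a (App Ycomb (Lam m (Lam s (Merge (App (Var a) (Var s)) R))))"

text \<open>One syntax for both \<open>\<sigma>\<close>-types and \<open>\<rho>\<close>-types (intersection is shared);
  \<open>REmp\<close> = <>, \<open>Fld l \<sigma>\<close> = <l:sigma>, \<open>Plus\<close> = +.\<close>
datatype ty =
    Atom atom
  | Omega
  | Arr ty ty
  | Inter ty ty
  | REmp
  | Fld label ty
  | Plus ty ty

fun rshape :: "ty \<Rightarrow> bool" where
  "rshape REmp = True"
| "rshape (Fld l s) = True"
| "rshape (Plus r1 r2) = (rshape r1 \<and> rshape r2)"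
| "rshape (Inter r1 r2) = (rshape r1 \<and> rshape r2)"
| "rshape _ = False"

fun isT :: "ty \<Rightarrow> bool" where
  "isT (Atom a) = True"
| "isT Omega = True"
| "isT (Arr s t) = (isT s \<and> isT t)"
| "isT (Inter s t) = (isT s \<and> isT t)"
| "isT REmp = True"
| "isT (Fld l s) = isT s"
| "isT (Plus r1 r2) = (rshape r1 \<and> rshape r2 \<and> isT r1 \<and> isT r2)"

definition isR :: "ty \<Rightarrow> bool" where
  "isR r \<longleftrightarrow> rshape r \<and> isT r"

fun lblT :: "ty \<Rightarrow> label set" where
  "lblT REmp = {}"
| "lblT (Fld l s) = {l}"
| "lblT (Inter r1 r2) = lblT r1 \<union> lblT r2"
| "lblT (Plus r1 r2) = lblT r1 \<union> lblT r2"
| "lblT _ = {}"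

fun plus_free :: "ty \<Rightarrow> bool" where
  "plus_free (Arr s t) = (plus_free s \<and> plus_free t)"
| "plus_free (Inter s t) = (plus_free s \<and> plus_free t)"
| "plus_free (Fld l s) = plus_free s"
| "plus_free (Plus r1 r2) = False"
| "plus_free _ = True"

inductive sub :: "ty \<Rightarrow> ty \<Rightarrow> bool" where
  refl: "isT s \<Longrightarrow> sub s s"
| trans: "sub s t \<Longrightarrow> sub t u \<Longrightarrow> sub s u"
| omega: "isT s \<Longrightarrow> sub s Omega"
| omega_arr: "sub Omega (Arr Omega Omega)"
| inter_l: "isT s \<Longrightarrow> isT t \<Longrightarrow> sub (Inter s t) s"
| inter_r: "isT s \<Longrightarrow> isT t \<Longrightarrow> sub (Inter s t) t"
| inter_glb: "sub s t1 \<Longrightarrow> sub s t2 \<Longrightarrow> sub s (Inter t1 t2)"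
| arr_inter: "isT s \<Longrightarrow> isT t1 \<Longrightarrow> isT t2 \<Longrightarrow>
     sub (Inter (Arr s t1) (Arr s t2)) (Arr s (Inter t1 t2))"
| arr: "sub s2 s1 \<Longrightarrow> sub t1 t2 \<Longrightarrow> sub (Arr s1 t1) (Arr s2 t2)"
| fld_emp: "isT s \<Longrightarrow> sub (Fld l s) REmp"
| fld_inter: "isT s \<Longrightarrow> isT t \<Longrightarrow> sub (Inter (Fld l s) (Fld l t)) (Fld l (Inter s t))"
| fld_mono: "sub s t \<Longrightarrow> sub (Fld l s) (Fld l t)"
| plus_emp_r1: "isR r \<Longrightarrow> sub (Plus r REmp) r"
| plus_emp_r2: "isR r \<Longrightarrow> sub r (Plus r REmp)"
| plus_emp_l1: "isR r \<Longrightarrow> sub (Plus REmp r) r"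
| plus_emp_l2: "isR r \<Longrightarrow> sub r (Plus REmp r)"
| plus_assoc1: "isR r1 \<Longrightarrow> isR r2 \<Longrightarrow> isR r3 \<Longrightarrow>
     sub (Plus (Plus r1 r2) r3) (Plus r1 (Plus r2 r3))"
| plus_assoc2: "isR r1 \<Longrightarrow> isR r2 \<Longrightarrow> isR r3 \<Longrightarrow>
     sub (Plus r1 (Plus r2 r3)) (Plus (Plus r1 r2) r3)"
| plus_distr1: "isR r1 \<Longrightarrow> isR r2 \<Longrightarrow> isR r3 \<Longrightarrow>
     sub (Plus (Inter r1 r2) r3) (Inter (Plus r1 r3) (Plus r2 r3))"
| plus_distr2: "isR r1 \<Longrightarrow> isR r2 \<Longrightarrow> isR r3 \<Longrightarrow>
     sub (Inter (Plus r1 r3) (Plus r2 r3)) (Plus (Inter r1 r2) r3)"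
| plus_ovr1: "isT s \<Longrightarrow> isT t \<Longrightarrow> isR r \<Longrightarrow>
     sub (Plus (Fld l s) (Inter (Fld l t) r)) (Inter (Fld l t) r)"
| plus_ovr2: "isT s \<Longrightarrow> isT t \<Longrightarrow> isR r \<Longrightarrow>
     sub (Inter (Fld l t) r) (Plus (Fld l s) (Inter (Fld l t) r))"
| plus_ext1: "l \<noteq> l' \<Longrightarrow> isT s \<Longrightarrow> isT t \<Longrightarrow> isR r \<Longrightarrow>
     sub (Plus (Fld l s) (Inter (Fld l' t) r)) (Inter (Fld l' t) (Plus (Fld l s) r))"
| plus_ext2: "l \<noteq> l' \<Longrightarrow> isT s \<Longrightarrow> isT t \<Longrightarrow> isR r \<Longrightarrow>
     sub (Inter (Fld l' t) (Plus (Fld l s) r)) (Plus (Fld l s) (Inter (Fld l' t) r))"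
| plus_mono: "sub r1 r2 \<Longrightarrow> isR r1 \<Longrightarrow> isR r2 \<Longrightarrow> isR r \<Longrightarrow>
     sub (Plus r1 r) (Plus r2 r)"
| plus_cong: "sub r1 r2 \<Longrightarrow> sub r2 r1 \<Longrightarrow> isR r1 \<Longrightarrow> isR r2 \<Longrightarrow> isR r \<Longrightarrow>
     sub (Plus r r1) (Plus r r2)"

type_synonym basis = "var \<Rightarrow> ty option"

inductive typing :: "basis \<Rightarrow> trm \<Rightarrow> ty \<Rightarrow> bool" where
  t_var: "\<Gamma> x = Some s \<Longrightarrow> typing \<Gamma> (Var x) s"
| t_abs: "isT s \<Longrightarrow> typing (\<Gamma>(x \<mapsto> s)) M t \<Longrightarrow> typing \<Gamma> (Lam x M) (Arr s t)"
| t_app: "typing \<Gamma> M (Arr s t) \<Longrightarrow> typing \<Gamma> N s \<Longrightarrow> typing \<Gamma> (App M N) t"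
| t_inter: "typing \<Gamma> M s \<Longrightarrow> typing \<Gamma> M t \<Longrightarrow> typing \<Gamma> M (Inter s t)"
| t_omega: "typing \<Gamma> M Omega"
| t_sub: "typing \<Gamma> M s \<Longrightarrow> sub s t \<Longrightarrow> typing \<Gamma> M t"
| t_rec_emp: "typing \<Gamma> (Rec R) REmp"
| t_rec_fld: "(l, N) \<in> set R \<Longrightarrow> typing \<Gamma> N s \<Longrightarrow> typing \<Gamma> (Rec R) (Fld l s)"
| t_sel: "typing \<Gamma> M (Fld l s) \<Longrightarrow> typing \<Gamma> (Sel M l) s"
| t_merge: "typing \<Gamma> M r1 \<Longrightarrow> typing \<Gamma> (Rec R) r2 \<Longrightarrow> lblR R = lblT r2 \<Longrightarrow>
     isR r1 \<Longrightarrow> isR r2 \<Longrightarrow> typing \<Gamma> (Merge M R) (Plus r1 r2)"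

text \<open>Unary constructors: \<open>RecC\<close> = <<.>>, \<open>LabC l\<close> = l(.).\<close>
datatype con = RecC | LabC label

datatype ctyp =
    CAtom atom
  | CVar tvar
  | COmega
  | CArr ctyp ctyp
  | CInter ctyp ctyp
  | CCon con ctyp

fun con_ok :: "label set \<Rightarrow> con \<Rightarrow> bool" where
  "con_ok L RecC = True"
| "con_ok L (LabC l) = (l \<in> L)"

fun isTC :: "label set \<Rightarrow> ctyp \<Rightarrow> bool" where
  "isTC L (CArr s t) = (isTC L s \<and> isTC L t)"
| "isTC L (CInter s t) = (isTC L s \<and> isTC L t)"
| "isTC L (CCon c t) = (con_ok L c \<and> isTC L t)"
| "isTC L _ = True"

inductive csub :: "label set \<Rightarrow> ctyp \<Rightarrow> ctyp \<Rightarrow> bool" for L where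
  crefl: "isTC L s \<Longrightarrow> csub L s s"
| ctrans: "csub L s t \<Longrightarrow> csub L t u \<Longrightarrow> csub L s u"
| comega: "isTC L s \<Longrightarrow> csub L s COmega"
| comega_arr: "csub L COmega (CArr COmega COmega)"
| cinter_l: "isTC L s \<Longrightarrow> isTC L t \<Longrightarrow> csub L (CInter s t) s"
| cinter_r: "isTC L s \<Longrightarrow> isTC L t \<Longrightarrow> csub L (CInter s t) t"
| cinter_glb: "csub L s t1 \<Longrightarrow> csub L s t2 \<Longrightarrow> csub L s (CInter t1 t2)"
| carr_inter: "isTC L s \<Longrightarrow> isTC L t1 \<Longrightarrow> isTC L t2 \<Longrightarrow>
     csub L (CInter (CArr s t1) (CArr s t2)) (CArr s (CInter t1 t2))"
| carr: "csub L s2 s1 \<Longrightarrow> csub L t1 t2 \<Longrightarrow> csub L (CArr s1 t1) (CArr s2 t2)"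
| ccon_mono: "con_ok L c \<Longrightarrow> csub L t1 t2 \<Longrightarrow> csub L (CCon c t1) (CCon c t2)"
| ccon_inter: "con_ok L c \<Longrightarrow> isTC L t1 \<Longrightarrow> isTC L t2 \<Longrightarrow>
     csub L (CInter (CCon c t1) (CCon c t2)) (CCon c (CInter t1 t2))"

definition ceq :: "label set \<Rightarrow> ctyp \<Rightarrow> ctyp \<Rightarrow> bool" where
  "ceq L s t \<longleftrightarrow> csub L s t \<and> csub L t s"

fun csubst :: "(tvar \<Rightarrow> ctyp) \<Rightarrow> ctyp \<Rightarrow> ctyp" where
  "csubst S (CVar v) = S v"
| "csubst S (CArr s t) = CArr (csubst S s) (csubst S t)"
| "csubst S (CInter s t) = CInter (csubst S s) (csubst S t)"
| "csubst S (CCon c t) = CCon c (csubst S t)"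
| "csubst S t = t"

fun tr :: "label set \<Rightarrow> ty \<Rightarrow> ctyp option" where
  "tr L Omega = Some COmega"
| "tr L (Atom a) = Some (CAtom a)"
| "tr L (Arr s t) = (case (tr L s, tr L t) of
      (Some s', Some t') \<Rightarrow> Some (CArr s' t') | _ \<Rightarrow> None)"
| "tr L (Inter s t) = (case (tr L s, tr L t) of
      (Some s', Some t') \<Rightarrow> Some (CInter s' t') | _ \<Rightarrow> None)"
| "tr L (Fld l t) = (if l \<in> L then
      (case tr L t of Some t' \<Rightarrow> Some (CCon RecC (CCon (LabC l) t')) | None \<Rightarrow> None)
      else None)"
| "tr L REmp = Some (CCon RecC COmega)"
| "tr L (Plus r1 r2) = None"

text \<open>Given the translations \<open>ts, tr1, tr2\<close> of \<open>\<sigma>, \<rho>\<^sub>1, \<rho>\<^sub>2\<close> and the type variables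
  \<open>\<alpha> l\<close>, the finite intersection over \<open>L - lbl R\<close> is taken in increasing label order.\<close>
definition tauM :: "label set \<Rightarrow> label set \<Rightarrow> (label \<Rightarrow> tvar) \<Rightarrow> ctyp \<Rightarrow> ctyp \<Rightarrow> ctyp \<Rightarrow> ctyp" where
  "tauM L lR \<alpha> ts tr1 tr2 =
     foldl (\<lambda>acc l. CInter acc
              (CArr (CArr ts (CCon RecC (CCon (LabC l) (CVar (\<alpha> l)))))
                    (CArr ts (CCon RecC (CCon (LabC l) (CVar (\<alpha> l)))))))
           (CArr (CArr ts tr1) (CArr ts tr2))
           (sorted_list_of_set (L - lR))"

end

theory Submission
  imports Defs
begin

text \<open>Read target types back into source types: the back-translation is monotone for
  \<open>\<le>\<close> and inverts \<open>[[\<cdot>]]\<close> up to equivalence, so \<open>[[\<tau>]] = S(\<tau>\<^sub>M)\<close> places \<open>\<tau>\<close> above the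
  back-translation of \<open>S(\<tau>\<^sub>M)\<close>, an intersection of types that \<open>M\<close> has. The first
  conjunct is the hypothesis at \<open>\<rho> = \<langle>\<rangle>\<close>, since a \<open>+\<close>-free \<open>\<rho>\<^sub>1\<close> lies below \<open>\<langle>\<rangle>\<close> and
  \<open>\<langle>\<rangle> + \<rho>\<^sub>2 = \<rho>\<^sub>2\<close>. The others hold whatever \<open>S(\<alpha>\<^sub>l)\<close> is, because merging with \<open>R\<close>
  leaves a field \<open>l \<notin> lbl(R)\<close> untouched; so \<open>\<alpha>\<close> need not be injective.\<close>

text \<open>\<open>rty_of_ctyp\<close> reads the argument of \<open>\<langle>\<langle>\<cdot>\<rangle>\<rangle>\<close> as a record type.\<close>

fun ty_of_ctyp :: "ctyp \<Rightarrow> ty" and rty_of_ctyp :: "ctyp \<Rightarrow> ty" where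
  "ty_of_ctyp (CAtom a) = Atom a"
| "ty_of_ctyp (CVar v) = Omega"
| "ty_of_ctyp COmega = Omega"
| "ty_of_ctyp (CArr s t) = Arr (ty_of_ctyp s) (ty_of_ctyp t)"
| "ty_of_ctyp (CInter s t) = Inter (ty_of_ctyp s) (ty_of_ctyp t)"
| "ty_of_ctyp (CCon RecC t) = rty_of_ctyp t"
| "ty_of_ctyp (CCon (LabC l) t) = Omega"
| "rty_of_ctyp (CCon (LabC l) t) = Fld l (ty_of_ctyp t)"
| "rty_of_ctyp (CInter s t) = Inter (rty_of_ctyp s) (rty_of_ctyp t)"
| "rty_of_ctyp (CAtom a) = REmp"
| "rty_of_ctyp (CVar v) = REmp"
| "rty_of_ctyp COmega = REmp"
| "rty_of_ctyp (CArr s t) = REmp"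
| "rty_of_ctyp (CCon RecC t) = REmp"

lemma isT_ty_of_ctyp [simp]: "isT (ty_of_ctyp u)"
  and isR_rty_of_ctyp [simp]: "isR (rty_of_ctyp u)"
proof (induction u)
  case (CCon c t)
  { case 1 show ?case using CCon by (cases c) (auto simp: isR_def) }
  { case 2 show ?case using CCon by (cases c) (auto simp: isR_def) }
qed (auto simp: isR_def)

lemma isT_rty_of_ctyp [simp]: "isT (rty_of_ctyp u)"
  using isR_rty_of_ctyp isR_def by blast

lemma rty_of_ctyp_sub_REmp: "sub (rty_of_ctyp u) REmp"
proof (induction u)
  case (CCon c t)
  then show ?case by (cases c) (auto intro: sub.fld_emp sub.refl)
next
  case (CInter s t)
  then show ?case by (auto intro: sub.trans[OF sub.inter_l])
qed (auto intro: sub.intros)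

lemma csub_imp_sub_ty_of_ctyp:
  "csub L u v \<Longrightarrow> sub (ty_of_ctyp u) (ty_of_ctyp v) \<and> sub (rty_of_ctyp u) (rty_of_ctyp v)"
proof (induction rule: csub.induct)
  case (ctrans s t u)
  then show ?case by (auto intro: sub.trans)
next
  case (comega s)
  then show ?case using rty_of_ctyp_sub_REmp by (auto intro: sub.omega)
next
  case (carr_inter s t1 t2)
  then show ?case by (auto intro: sub.intros sub.trans[OF sub.inter_l])
next
  case (ccon_mono c t1 t2)
  then show ?case by (cases c) (auto intro: sub.intros)
next
  case (ccon_inter c t1 t2)
  then show ?case by (cases c) (auto intro: sub.intros sub.trans[OF sub.inter_l])
qed (auto intro: sub.intros)

lemma ty_of_ctyp_tr:
  "tr L \<tau> = Some t \<Longrightarrow> isT \<tau> \<Longrightarrow> sub (ty_of_ctyp t) \<tau> \<and> sub \<tau> (ty_of_ctyp t)"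
proof (induction \<tau> arbitrary: t)
  case (Arr \<sigma> \<tau>)
  then show ?case by (auto split: option.splits intro: sub.arr)
next
  case (Inter \<sigma> \<tau>)
  then obtain s u where tr: "tr L \<sigma> = Some s" "tr L \<tau> = Some u" and t: "t = CInter s u"
    by (auto split: option.splits)
  with Inter have "sub (ty_of_ctyp s) \<sigma>" "sub \<sigma> (ty_of_ctyp s)"
    "sub (ty_of_ctyp u) \<tau>" "sub \<tau> (ty_of_ctyp u)"
    by auto
  with Inter.prems show ?case unfolding t
    by (auto intro!: sub.inter_glb intro: sub.trans[OF sub.inter_l] sub.trans[OF sub.inter_r])
next
  case (Fld l \<tau>)
  then show ?case by (auto split: option.splits if_splits intro: sub.fld_mono)
qed (auto intro: sub.intros)

lemma csubst_tr: "tr L \<tau> = Some t \<Longrightarrow> csubst S t = t"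
  by (induction \<tau> arbitrary: t) (auto split: option.splits if_splits)

lemma sub_REmp_if_plus_free: "isR r \<Longrightarrow> plus_free r \<Longrightarrow> sub r REmp"
  unfolding isR_def
  by (induction r) (auto intro: sub.intros sub.trans[OF sub.inter_l])

text \<open>A type of the record \<open>R\<close> with exactly its labels, as \<open>M \<oplus> R\<close> can only be typed
  at \<open>\<rho> + \<rho>'\<close> with \<open>lbl(\<rho>') = lbl(R)\<close>.\<close>

definition omega_fields :: "label list \<Rightarrow> ty" where
  "omega_fields ls = foldr (\<lambda>l r. Inter (Fld l Omega) r) ls REmp"

lemma isR_omega_fields: "isR (omega_fields ls)"
  and lblT_omega_fields: "lblT (omega_fields ls) = set ls"
  by (induction ls) (auto simp: omega_fields_def isR_def)

lemma typing_Rec_omega_fields: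
  "set ls \<subseteq> lblR R \<Longrightarrow> typing \<Gamma> (Rec R) (omega_fields ls)"
proof (induction ls)
  case Nil
  then show ?case by (simp add: omega_fields_def typing.t_rec_emp)
next
  case (Cons l ls)
  then obtain N where "(l, N) \<in> set R" by (auto simp: lblR_def)
  then have "typing \<Gamma> (Rec R) (Fld l Omega)" by (rule typing.t_rec_fld) (rule typing.t_omega)
  with Cons show ?case by (auto simp: omega_fields_def intro: typing.t_inter)
qed

declare sub.trans [trans]

lemma Plus_Fld_omega_fields_sub:
  assumes "l \<notin> set ls" and "isT x"
  shows "sub (Plus (Fld l x) (omega_fields ls)) (Fld l x)"
  using assms
proof (induction ls)
  case Nil
  then show ?case by (simp add: omega_fields_def isR_def sub.plus_emp_r1)
next
  case (Cons l' ls)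
  have rec: "isR (omega_fields ls)" by (rule isR_omega_fields)
  have "sub (Plus (Fld l x) (omega_fields (l' # ls)))
            (Inter (Fld l' Omega) (Plus (Fld l x) (omega_fields ls)))"
    using Cons.prems rec by (auto simp: omega_fields_def intro: sub.plus_ext1)
  also have "sub \<dots> (Plus (Fld l x) (omega_fields ls))"
    using Cons.prems rec by (intro sub.inter_r) (auto simp: isR_def)
  also have "sub \<dots> (Fld l x)"
    using Cons by simp
  finally show ?case .
qed

lemma typing_Ycomb: "isT X \<Longrightarrow> typing \<Gamma> Ycomb (Arr (Arr Omega X) X)"
  unfolding Ycomb_def
  by (auto intro!: typing.t_abs typing.t_app[where s = Omega] typing.t_var typing.t_omega)

lemma typing_mixin_Fld:
  assumes vars: "distinct [a, m, s]" and l: "l \<notin> lblR R" and "isT \<sigma>" "isT x"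
  shows "typing \<Gamma> (mixin a m s R) (Arr (Arr \<sigma> (Fld l x)) (Arr \<sigma> (Fld l x)))"
proof -
  let ?A = "Arr \<sigma> (Fld l x)"
  let ?\<Gamma> = "\<Gamma>(a \<mapsto> ?A, m \<mapsto> Omega, s \<mapsto> \<sigma>)"
  let ?body = "Merge (App (Var a) (Var s)) R"
  have "typing ?\<Gamma> (App (Var a) (Var s)) (Fld l x)"
    using vars by (auto intro!: typing.t_app[where s = \<sigma>] typing.t_var)
  moreover have "typing ?\<Gamma> (Rec R) (omega_fields (map fst R))"
    by (rule typing_Rec_omega_fields) (simp add: lblR_def)
  ultimately have "typing ?\<Gamma> ?body (Plus (Fld l x) (omega_fields (map fst R)))"
    using assms isR_omega_fields[of "map fst R"]
    by (intro typing.t_merge) (auto simp: lblR_def isR_def lblT_omega_fields)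
  moreover have "sub (Plus (Fld l x) (omega_fields (map fst R))) (Fld l x)"
    using assms by (intro Plus_Fld_omega_fields_sub) (auto simp: lblR_def)
  ultimately have "typing ?\<Gamma> ?body (Fld l x)"
    by (rule typing.t_sub)
  then have "typing (\<Gamma>(a \<mapsto> ?A)) (Lam m (Lam s ?body)) (Arr Omega ?A)"
    using assms by (auto intro!: typing.t_abs)
  moreover have "typing (\<Gamma>(a \<mapsto> ?A)) Ycomb (Arr (Arr Omega ?A) ?A)"
    using assms by (intro typing_Ycomb) auto
  ultimately show ?thesis
    unfolding mixin_def using assms by (auto intro!: typing.t_abs intro: typing.t_app)
qed

lemma typing_mixin_foldl_Fld_conjuncts:
  assumes vars: "distinct [a, m, s]"
    and acc: "typing \<Gamma> (mixin a m s R) (ty_of_ctyp (csubst S acc))"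
    and ls: "set ls \<inter> lblR R = {}"
  shows "typing \<Gamma> (mixin a m s R) (ty_of_ctyp (csubst S (foldl (\<lambda>acc l. CInter acc
              (CArr (CArr ts (CCon RecC (CCon (LabC l) (CVar (\<alpha> l)))))
                    (CArr ts (CCon RecC (CCon (LabC l) (CVar (\<alpha> l))))))) acc ls)))"
  using acc ls
proof (induction ls arbitrary: acc)
  case Nil
  then show ?case by simp
next
  case (Cons l ls)
  let ?F = "CCon RecC (CCon (LabC l) (CVar (\<alpha> l)))"
  have "typing \<Gamma> (mixin a m s R)
          (Arr (Arr (ty_of_ctyp (csubst S ts)) (Fld l (ty_of_ctyp (S (\<alpha> l)))))
               (Arr (ty_of_ctyp (csubst S ts)) (Fld l (ty_of_ctyp (S (\<alpha> l))))))"
    using Cons.prems vars by (intro typing_mixin_Fld) auto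
  with Cons.prems have "typing \<Gamma> (mixin a m s R)
      (ty_of_ctyp (csubst S (CInter acc (CArr (CArr ts ?F) (CArr ts ?F)))))"
    by (auto intro: typing.t_inter)
  with Cons.IH Cons.prems show ?case by simp
qed

lemma typing_arr_arr_sub:
  assumes M: "typing \<Gamma> M (Arr (Arr \<sigma> \<rho>1) (Arr \<sigma> \<rho>2))"
    and "sub \<sigma>' \<sigma>" "sub \<sigma> \<sigma>'" "sub \<rho>1' \<rho>1" "sub \<rho>2 \<rho>2'"
  shows "typing \<Gamma> M (Arr (Arr \<sigma>' \<rho>1') (Arr \<sigma>' \<rho>2'))"
  using M by (rule typing.t_sub) (use assms in \<open>intro sub.arr\<close>)

theorem lemma5p2:
  fixes L :: "label set" and a m s :: var and R :: "(label \<times> trm) list"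
    and \<sigma> \<rho>1 \<rho>2 :: ty and ts tr1 tr2 :: ctyp and \<alpha> :: "label \<Rightarrow> tvar"
  assumes finL: "finite L"
    and vars: "distinct [a, m, s]"
    and closed: "fv (mixin a m s R) = {}"
    and wfM: "wf_trm (mixin a m s R)"
    and \<sigma>T: "isT \<sigma>" and \<rho>1R: "isR \<rho>1" and \<rho>2R: "isR \<rho>2"
    and pf: "plus_free \<sigma>" "plus_free \<rho>1" "plus_free \<rho>2"
    and tr_\<sigma>: "tr L \<sigma> = Some ts" and tr_\<rho>1: "tr L \<rho>1 = Some tr1" and tr_\<rho>2: "tr L \<rho>2 = Some tr2"
    and lbl: "lblT \<rho>2 = lblR R"
    and typed: "\<forall>\<rho>. isR \<rho> \<longrightarrow>
        typing Map.empty (mixin a m s R)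
          (Arr (Arr \<sigma> (Inter \<rho> \<rho>1)) (Arr \<sigma> (Plus \<rho> \<rho>2)))"
    and \<alpha>_distinct: "inj_on \<alpha> (L - lblR R)"
  shows "\<forall>S \<tau> t. (\<forall>v. isTC L (S v)) \<longrightarrow> isT \<tau> \<longrightarrow> tr L \<tau> = Some t \<longrightarrow>
           ceq L t (csubst S (tauM L (lblR R) \<alpha> ts tr1 tr2)) \<longrightarrow>
           typing Map.empty (mixin a m s R) \<tau>"
proof (intro allI impI)
  fix S \<tau> t
  assume \<tau>T: "isT \<tau>" and tr_\<tau>: "tr L \<tau> = Some t"
    and eq: "ceq L t (csubst S (tauM L (lblR R) \<alpha> ts tr1 tr2))"
  have \<rho>1T: "isT \<rho>1" and \<rho>2T: "isT \<rho>2" using \<rho>1R \<rho>2R by (auto simp: isR_def)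
  have "typing Map.empty (mixin a m s R) (Arr (Arr \<sigma> (Inter REmp \<rho>1)) (Arr \<sigma> (Plus REmp \<rho>2)))"
    using typed by (auto simp: isR_def)
  then have "typing Map.empty (mixin a m s R)
      (Arr (Arr (ty_of_ctyp ts) (ty_of_ctyp tr1)) (Arr (ty_of_ctyp ts) (ty_of_ctyp tr2)))"
    using ty_of_ctyp_tr[OF tr_\<sigma> \<sigma>T] ty_of_ctyp_tr[OF tr_\<rho>1 \<rho>1T] ty_of_ctyp_tr[OF tr_\<rho>2 \<rho>2T]
      sub_REmp_if_plus_free[OF \<rho>1R pf(2)] sub.plus_emp_l1[OF \<rho>2R]
    by (elim typing_arr_arr_sub) (auto intro: sub.inter_glb sub.trans)
  then have "typing Map.empty (mixin a m s R) (ty_of_ctyp (csubst S (tauM L (lblR R) \<alpha> ts tr1 tr2)))"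
    unfolding tauM_def using finL
    by (intro typing_mixin_foldl_Fld_conjuncts[OF vars])
      (auto simp: csubst_tr[OF tr_\<sigma>] csubst_tr[OF tr_\<rho>1] csubst_tr[OF tr_\<rho>2])
  moreover have "sub (ty_of_ctyp (csubst S (tauM L (lblR R) \<alpha> ts tr1 tr2))) (ty_of_ctyp t)"
    using eq csub_imp_sub_ty_of_ctyp unfolding ceq_def by blast
  moreover have "sub (ty_of_ctyp t) \<tau>"
    using ty_of_ctyp_tr[OF tr_\<tau> \<tau>T] by blast
  ultimately show "typing Map.empty (mixin a m s R) \<tau>"
    by (meson typing.t_sub)
qed

end
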